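(* Let $M=(\alpha_{i,j})$ be a Griffiths positive $k\times k$ matrix of constant coefficient $(1,1)$-forms on $\mathbb{C}^n$ ($k\geqslant 2$) such that $\alpha_{1,1}=\omega:=\sum_{l=1}^n\frac{\sqrt{-1}}{2}dz_l\wedge d\overline{z_l}$ in complex linear coordinates $(z_1,\dots,z_n)$. Then there is $C\in GL_k(\mathbb{C})$ such that \[ C\cdot M\cdot C^H= \begin{pmatrix} \omega & \rho_{1,2} & \cdots & \rho_{1,k}\\ \overline{\rho_{1,2}} & \omega+\rho_{2,2} & \cdots & \rho_{2,k}\\ \vdots & \vdots & \ddots & \vdots\\ \overline{\rho_{1,k}} & \overline{\rho_{2,k}} & \cdots & \omega+\rho_{k,k} \end{pmatrix} \] with all $\rho_{i,j}\in P^{1,1}$. Moreover, one may in addition choose (after a change of complex linear coordinates in which $\omega$ keeps the form $\sum_l\frac{\sqrt{-1}}{2}dz_l\wedge d\overline{z_l}$) that $\rho_{2,2}=\sum_{l=1}^n b_{2,2}^{(l)}\frac{\sqrt{-1}}{2}dz_l\wedge d\overline{z_l}$ with $\sum_{l=1}^n b_{2,2}^{(l)}=0$ and $b_{2,2}^{(l)}>-1$ for each $1\leqslant l\leqslant n$.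
   Context: $V^{1,1}$ denotes the space of constant coefficient $(1,1)$-forms on $\mathbb{C}^n$. A $(1,1)$-form is Kähler if it equals $\sum_l\frac{\sqrt{-1}}{2}dw_l\wedge d\overline{w_l}$ in some complex linear coordinates. A $k\times k$ matrix $M=(\alpha_{i,j})$ of $(1,1)$-forms with $\alpha_{i,j}=\overline{\alpha_{j,i}}$ is Griffiths positive if $\sum_{i,j}\theta_i\alpha_{i,j}\overline{\theta_j}$ is Kähler for all $\theta\in\mathbb{C}^k\setminus\{0\}$. For $C=(c_{i,j})\in GL_k(\mathbb{C})$, $C\cdot M\cdot C^H$ is the matrix with entries $\sum_{a,b}c_{i,a}\alpha_{a,b}\overline{c_{j,b}}$. The primitive space is $P^{1,1}=\{\alpha\in V^{1,1}:\alpha\wedge\omega^{n-1}=0\}$. *)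

theory Defs
  imports "HOL-Analysis.Analysis"
begin

text \<open>A constant coefficient (1,1)-form on C^n in coordinates z is represented by its
coefficient matrix h, meaning  sum_{a,b<n} h a b (sqrt(-1)/2) dz_a wedge dzbar_b.
Only the entries with indices below n are meaningful.\<close>

type_synonym form = "nat \<Rightarrow> nat \<Rightarrow> complex"

definition feq :: "nat \<Rightarrow> form \<Rightarrow> form \<Rightarrow> bool" where
  "feq n h g \<longleftrightarrow> (\<forall>a<n. \<forall>b<n. h a b = g a b)"

definition omega :: form where
  "omega = (\<lambda>a b. if a = b then 1 else 0)"

definition conj_form :: "form \<Rightarrow> form" where
  "conj_form h = (\<lambda>a b. cnj (h b a))"

definition invertible_n :: "nat \<Rightarrow> (nat \<Rightarrow> nat \<Rightarrow> complex) \<Rightarrow> bool" where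
  "invertible_n n A \<longleftrightarrow> (\<exists>B.
     (\<forall>a<n. \<forall>b<n. (\<Sum>c<n. A a c * B c b) = (if a = b then 1 else 0)) \<and>
     (\<forall>a<n. \<forall>b<n. (\<Sum>c<n. B a c * A c b) = (if a = b then 1 else 0)))"

text \<open>Kaehler: equals sum_l (sqrt(-1)/2) dw_l wedge dwbar_l for some complex linear
coordinates w_l = sum_a A l a z_a (A invertible).\<close>
definition kahler :: "nat \<Rightarrow> form \<Rightarrow> bool" where
  "kahler n h \<longleftrightarrow> (\<exists>A. invertible_n n A \<and>
     feq n h (\<lambda>a b. \<Sum>l<n. A l a * cnj (A l b)))"

text \<open>Coefficient of alpha_0 wedge ... wedge alpha_{n-1} with respect to the volume form
prod_a (sqrt(-1)/2) dz_a wedge dzbar_a.\<close>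
definition wedge_top :: "nat \<Rightarrow> (nat \<Rightarrow> form) \<Rightarrow> complex" where
  "wedge_top n H = (\<Sum>\<sigma>\<in>{p. p permutes {..<n}}. \<Sum>\<tau>\<in>{p. p permutes {..<n}}.
      of_int (sign \<sigma> * sign \<tau>) * (\<Prod>j<n. H j (\<sigma> j) (\<tau> j)))"

text \<open>primitive: alpha wedge omega^(n-1) = 0\<close>
definition primitive :: "nat \<Rightarrow> form \<Rightarrow> bool" where
  "primitive n h \<longleftrightarrow> wedge_top n (\<lambda>j. if j = 0 then h else omega) = 0"

definition griffiths_positive :: "nat \<Rightarrow> nat \<Rightarrow> (nat \<Rightarrow> nat \<Rightarrow> form) \<Rightarrow> bool" where
  "griffiths_positive n k M \<longleftrightarrow>
     (\<forall>i<k. \<forall>j<k. feq n (M i j) (conj_form (M j i))) \<and>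
     (\<forall>\<theta>::nat \<Rightarrow> complex. (\<exists>i<k. \<theta> i \<noteq> 0) \<longrightarrow>
        kahler n (\<lambda>a b. \<Sum>i<k. \<Sum>j<k. \<theta> i * M i j a b * cnj (\<theta> j)))"

definition congr :: "nat \<Rightarrow> (nat \<Rightarrow> nat \<Rightarrow> complex) \<Rightarrow> (nat \<Rightarrow> nat \<Rightarrow> form) \<Rightarrow> nat \<Rightarrow> nat \<Rightarrow> form" where
  "congr k C M i j = (\<lambda>a b. \<Sum>p<k. \<Sum>q<k. C i p * M p q a b * cnj (C j q))"

text \<open>Coefficients of a form in new linear coordinates w, where z_a = sum_c V a c w_c.\<close>
definition coord_change :: "nat \<Rightarrow> (nat \<Rightarrow> nat \<Rightarrow> complex) \<Rightarrow> form \<Rightarrow> form" where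
  "coord_change n V h = (\<lambda>c d. \<Sum>a<n. \<Sum>b<n. V a c * h a b * cnj (V b d))"

text \<open>The normal form of the theorem (0-based indices; index 0 is the paper's 1).\<close>
definition normal_shape :: "nat \<Rightarrow> nat \<Rightarrow> (nat \<Rightarrow> nat \<Rightarrow> form) \<Rightarrow> bool" where
  "normal_shape n k N \<longleftrightarrow>
     feq n (N 0 0) omega \<and>
     (\<forall>i<k. i \<noteq> 0 \<longrightarrow> primitive n (\<lambda>a b. N i i a b - omega a b)) \<and>
     (\<forall>i<k. \<forall>j<k. i < j \<longrightarrow> primitive n (N i j) \<and> feq n (N j i) (conj_form (N i j)))"

end

theory Submission
  imports Defs "Jordan_Normal_Form.Spectral_Radius"
begin

text \<open>Let \<open>T\<close> be the Hermitian \<open>k \<times> k\<close> matrix of normalised traces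
\<open>T\<^sub>i\<^sub>j = tr \<alpha>\<^sub>i\<^sub>j / n\<close>. Griffiths positivity makes \<open>T\<close> positive definite, and
\<open>\<alpha>\<^sub>1\<^sub>1 = \<omega>\<close> gives \<open>T\<^sub>1\<^sub>1 = 1\<close>. Writing \<open>T = R R\<^sup>H\<close>, the matrix
\<open>C = W R\<^sup>-\<^sup>1\<close>, with \<open>W\<close> a unitary matrix (a Householder reflection) whose first row is
that of \<open>R\<close>, satisfies \<open>C T C\<^sup>H = I\<close> and has first row \<open>e\<^sub>1\<close>. Hence
\<open>N = C M C\<^sup>H\<close> has \<open>N\<^sub>1\<^sub>1 = \<omega>\<close> and \<open>tr N\<^sub>i\<^sub>j = n \<delta>\<^sub>i\<^sub>j\<close>, which is the
claimed normal form because a constant \<open>(1,1)\<close>-form is primitive exactly when its trace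
vanishes. Finally \<open>N\<^sub>2\<^sub>2\<close> is Kaehler, so a unitary change of coordinates, which
preserves \<open>\<omega>\<close>, traces and thus the normal form, diagonalises it with positive eigenvalues
\<open>1 + b\<^sub>l\<close> summing to \<open>n\<close>.\<close>

section \<open>Complex matrices as coefficient functions\<close>

text \<open>A matrix of size \<open>m\<close> is a function whose entries outside \<open>{..<m}\<^sup>2\<close> are
arbitrary, so identities between matrices are stated with \<^const>\<open>feq\<close> rather than \<open>=\<close>.\<close>

type_synonym cmat = "nat \<Rightarrow> nat \<Rightarrow> complex"

definition id_mat :: cmat where
  "id_mat = (\<lambda>i j. if i = j then 1 else 0)"

definition mat_mult :: "nat \<Rightarrow> cmat \<Rightarrow> cmat \<Rightarrow> cmat" where
  "mat_mult m A B = (\<lambda>i j. \<Sum>c<m. A i c * B c j)"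

definition diagonal :: "(nat \<Rightarrow> complex) \<Rightarrow> cmat" where
  "diagonal d = (\<lambda>i j. if i = j then d i else 0)"

definition form_trace :: "nat \<Rightarrow> form \<Rightarrow> complex" where
  "form_trace n h = (\<Sum>a<n. h a a)"

definition hermitian :: "nat \<Rightarrow> cmat \<Rightarrow> bool" where
  "hermitian m A \<longleftrightarrow> feq m (conj_form A) A"

definition unitary :: "nat \<Rightarrow> cmat \<Rightarrow> bool" where
  "unitary m U \<longleftrightarrow>
     feq m (mat_mult m (conj_form U) U) id_mat \<and> feq m (mat_mult m U (conj_form U)) id_mat"

lemma feq_refl [simp]: "feq m A A"
  unfolding feq_def by simp

lemma feq_sym: "feq m A B \<Longrightarrow> feq m B A"
  unfolding feq_def by simp

lemma feq_trans [trans]: "feq m A B \<Longrightarrow> feq m B C \<Longrightarrow> feq m A C"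
  unfolding feq_def by simp

lemma mat_mult_assoc: "mat_mult m (mat_mult m A B) C = mat_mult m A (mat_mult m B C)"
proof (intro ext)
  fix i j
  have "(\<Sum>c<m. (\<Sum>d<m. A i d * B d c) * C c j) = (\<Sum>c<m. \<Sum>d<m. A i d * B d c * C c j)"
    by (simp add: sum_distrib_right)
  also have "\<dots> = (\<Sum>d<m. \<Sum>c<m. A i d * B d c * C c j)"
    by (rule sum.swap)
  also have "\<dots> = (\<Sum>d<m. A i d * (\<Sum>c<m. B d c * C c j))"
    by (simp add: sum_distrib_left mult.assoc)
  finally show "mat_mult m (mat_mult m A B) C i j = mat_mult m A (mat_mult m B C) i j"
    unfolding mat_mult_def .
qed

lemma conj_form_mat_mult: "conj_form (mat_mult m A B) = mat_mult m (conj_form B) (conj_form A)"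
  unfolding mat_mult_def conj_form_def by (auto simp: mult.commute intro!: ext)

lemma conj_form_conj_form [simp]: "conj_form (conj_form A) = A"
  unfolding conj_form_def by simp

lemma conj_form_id_mat [simp]: "conj_form id_mat = id_mat"
  unfolding conj_form_def id_mat_def by (auto intro!: ext)

lemma conj_form_diagonal: "conj_form (diagonal d) = diagonal (\<lambda>i. cnj (d i))"
  unfolding conj_form_def diagonal_def by (auto intro!: ext)

lemma mat_mult_cong: "feq m A A' \<Longrightarrow> feq m B B' \<Longrightarrow> feq m (mat_mult m A B) (mat_mult m A' B')"
  unfolding feq_def mat_mult_def by (auto intro!: sum.cong)

lemma conj_form_cong: "feq m A B \<Longrightarrow> feq m (conj_form A) (conj_form B)"
  unfolding feq_def conj_form_def by simp

lemma invertible_n_if_inverse: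
  assumes "feq m (mat_mult m A B) id_mat" "feq m (mat_mult m B A) id_mat"
  shows "invertible_n m A"
  using assms unfolding invertible_n_def feq_def mat_mult_def id_mat_def by blast

lemma invertible_n_apply_nonzero:
  assumes "invertible_n n A" "\<exists>i<n. x i \<noteq> 0"
  shows "\<exists>l<n. (\<Sum>a<n. A l a * x a) \<noteq> 0"
proof (rule ccontr)
  obtain B where BA: "\<forall>a<n. \<forall>b<n. (\<Sum>c<n. B a c * A c b) = (if a = b then 1 else 0)"
    using assms(1) unfolding invertible_n_def by blast
  obtain i where i: "i < n" "x i \<noteq> 0"
    using assms(2) by blast
  assume "\<not> ?thesis"
  then have "(\<Sum>c<n. B i c * (\<Sum>a<n. A c a * x a)) = 0"
    by simp
  moreover have "(\<Sum>c<n. B i c * (\<Sum>a<n. A c a * x a)) = (\<Sum>c<n. \<Sum>a<n. B i c * A c a * x a)"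
    by (simp add: sum_distrib_left mult.assoc)
  moreover have "\<dots> = (\<Sum>a<n. (\<Sum>c<n. B i c * A c a) * x a)"
    by (subst sum.swap) (simp add: sum_distrib_right)
  moreover have "\<dots> = x i"
    using BA i by (simp add: mult_delta_left)
  ultimately show False
    using i by simp
qed

lemma sum_swap3: "(\<Sum>c\<in>C. \<Sum>a\<in>A. \<Sum>b\<in>B. F c a b) = (\<Sum>a\<in>A. \<Sum>b\<in>B. \<Sum>c\<in>C. F c a b)"
  by (subst sum.swap) (rule sum.cong[OF refl sum.swap])

lemma sum_id_mat_left: "i < m \<Longrightarrow> (\<Sum>l<m. id_mat i l * f l) = f i"
  unfolding id_mat_def by (simp add: mult_delta_left)

lemma sum_id_mat_right: "j < m \<Longrightarrow> (\<Sum>l<m. f l * id_mat l j) = f j"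
  unfolding id_mat_def by (simp add: mult_delta_right)

lemma mat_mult_id_left: "feq m (mat_mult m id_mat A) A"
  unfolding feq_def mat_mult_def by (simp add: sum_id_mat_left)

lemma mat_mult_id_right: "feq m (mat_mult m A id_mat) A"
  unfolding feq_def mat_mult_def by (simp add: sum_id_mat_right)

lemma mat_mult_diagonal_left: "i < m \<Longrightarrow> mat_mult m (diagonal d) A i j = d i * A i j"
  unfolding mat_mult_def diagonal_def by (simp add: mult_delta_left)

lemma mat_mult_diagonal_right: "j < m \<Longrightarrow> mat_mult m A (diagonal d) i j = A i j * d j"
  unfolding mat_mult_def diagonal_def by (simp add: mult_delta_right)

lemma mat_mult_diagonal_diagonal:
  "feq m (mat_mult m (diagonal a) (diagonal b)) (diagonal (\<lambda>i. a i * b i))"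
  unfolding feq_def by (intro allI impI) (simp add: mat_mult_diagonal_left, simp add: diagonal_def)

lemma mat_mult_cancel_middle:
  "feq m X id_mat \<Longrightarrow> feq m (mat_mult m A (mat_mult m X B)) (mat_mult m A B)"
  by (rule mat_mult_cong[OF feq_refl feq_trans[OF mat_mult_cong[OF _ feq_refl] mat_mult_id_left]])

lemma unitary_mat_mult:
  assumes "unitary m U" "unitary m W"
  shows "unitary m (mat_mult m U W)"
proof -
  have U: "feq m (mat_mult m (conj_form U) U) id_mat" "feq m (mat_mult m U (conj_form U)) id_mat"
   and W: "feq m (mat_mult m (conj_form W) W) id_mat" "feq m (mat_mult m W (conj_form W)) id_mat"
    using assms unfolding unitary_def by auto
  have "mat_mult m (conj_form (mat_mult m U W)) (mat_mult m U W)
      = mat_mult m (conj_form W) (mat_mult m (mat_mult m (conj_form U) U) W)"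
   and "mat_mult m (mat_mult m U W) (conj_form (mat_mult m U W))
      = mat_mult m U (mat_mult m (mat_mult m W (conj_form W)) (conj_form U))"
    by (simp_all add: conj_form_mat_mult mat_mult_assoc)
  with feq_trans[OF mat_mult_cancel_middle[OF U(1)] W(1)]
       feq_trans[OF mat_mult_cancel_middle[OF W(2)] U(2)]
  show ?thesis unfolding unitary_def by simp
qed

lemma unitary_diagonal: "(\<And>i. i < m \<Longrightarrow> d i * cnj (d i) = 1) \<Longrightarrow> unitary m (diagonal d)"
  unfolding unitary_def feq_def conj_form_diagonal
  by (simp add: mat_mult_diagonal_left) (auto simp: diagonal_def id_mat_def mult.commute)

lemma unitary_cnj:
  assumes "unitary m U"
  shows "unitary m (\<lambda>a c. cnj (U a c))"
proof -
  have "mat_mult m (conj_form (\<lambda>a c. cnj (U a c))) (\<lambda>a c. cnj (U a c))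
      = (\<lambda>i j. cnj (mat_mult m (conj_form U) U i j))"
   and "mat_mult m (\<lambda>a c. cnj (U a c)) (conj_form (\<lambda>a c. cnj (U a c)))
      = (\<lambda>i j. cnj (mat_mult m U (conj_form U) i j))"
    unfolding mat_mult_def conj_form_def by (simp_all add: cnj_sum)
  moreover have "\<And>i j. cnj (id_mat i j) = id_mat i j"
    unfolding id_mat_def by simp
  ultimately show ?thesis
    using assms unfolding unitary_def feq_def by simp
qed

lemma unitary_cancel_left: "unitary m U \<Longrightarrow> feq m (mat_mult m (conj_form U) (mat_mult m U X)) X"
  unfolding mat_mult_assoc[symmetric] unitary_def
  by (rule feq_trans[OF mat_mult_cong[OF _ feq_refl] mat_mult_id_left]) simp

lemma unitary_conjugate_back:
  assumes "unitary m U"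
  shows "feq m (mat_mult m U (mat_mult m (mat_mult m (conj_form U) (mat_mult m X U)) (conj_form U))) X"
proof -
  have UU: "feq m (mat_mult m U (conj_form U)) id_mat"
    using assms unfolding unitary_def by simp
  have "feq m (mat_mult m U (mat_mult m (mat_mult m (conj_form U) (mat_mult m X U)) (conj_form U)))
      (mat_mult m (mat_mult m U (conj_form U)) (mat_mult m X (mat_mult m U (conj_form U))))"
    by (simp add: mat_mult_assoc)
  also have "feq m \<dots> (mat_mult m id_mat (mat_mult m X id_mat))"
    by (rule mat_mult_cong[OF UU mat_mult_cong[OF feq_refl UU]])
  also have "feq m \<dots> X"
    by (rule feq_trans[OF mat_mult_id_left mat_mult_id_right])
  finally show ?thesis .
qed

lemma invertible_n_unitary: "unitary m U \<Longrightarrow> invertible_n m U"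
  by (rule invertible_n_if_inverse[of m U "conj_form U"]) (simp_all add: unitary_def)

definition diag_block :: "complex \<Rightarrow> cmat \<Rightarrow> cmat" where
  "diag_block z P = (\<lambda>i j. if i = 0 \<and> j = 0 then z else if i = 0 \<or> j = 0 then 0 else P (i - 1) (j - 1))"

lemma mat_mult_diag_block:
  "mat_mult (Suc m) (diag_block z P) (diag_block z' Q) = diag_block (z * z') (mat_mult m P Q)"
proof (intro ext)
  fix i j
  show "mat_mult (Suc m) (diag_block z P) (diag_block z' Q) i j = diag_block (z * z') (mat_mult m P Q) i j"
    unfolding mat_mult_def sum.lessThan_Suc_shift
    by (cases i; cases j) (simp_all add: diag_block_def)
qed

lemma conj_form_diag_block: "conj_form (diag_block z P) = diag_block (cnj z) (conj_form P)"
  unfolding conj_form_def diag_block_def by (auto intro!: ext)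

lemma diag_block_id_mat: "diag_block 1 id_mat = id_mat"
  unfolding id_mat_def diag_block_def by (auto intro!: ext)

lemma diag_block_diagonal: "diag_block (d 0) (diagonal (\<lambda>i. d (Suc i))) = diagonal d"
proof (intro ext)
  fix i j
  show "diag_block (d 0) (diagonal (\<lambda>i. d (Suc i))) i j = diagonal d i j"
    by (cases i; cases j) (simp_all add: diag_block_def diagonal_def)
qed

lemma diag_block_cong: "feq m P Q \<Longrightarrow> feq (Suc m) (diag_block z P) (diag_block z Q)"
  unfolding feq_def diag_block_def by auto

lemma unitary_diag_block: "unitary m W \<Longrightarrow> unitary (Suc m) (diag_block 1 W)"
  unfolding unitary_def
  by (simp add: conj_form_diag_block mat_mult_diag_block) (metis diag_block_cong diag_block_id_mat)

section \<open>Unitary diagonalisation of Hermitian matrices\<close>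

lemma householder_unitary:
  fixes w :: "nat \<Rightarrow> complex" and s :: real
  assumes norm: "(\<Sum>l<m. w l * cnj (w l)) = of_real s" and "s \<noteq> 0"
  shows "unitary m (\<lambda>i j. id_mat i j - of_real (2 / s) * w i * cnj (w j))"
proof -
  define c where "c = complex_of_real (2 / s)"
  define H where "H = (\<lambda>i j. id_mat i j - c * w i * cnj (w j))"
  have cs: "c * of_real s = 2"
    using \<open>s \<noteq> 0\<close> unfolding c_def by (simp flip: of_real_mult)
  have "cnj c = c"
    unfolding c_def by simp
  then have herm: "conj_form H = H"
    unfolding conj_form_def H_def id_mat_def by (auto intro!: ext simp: mult.commute)
  have "feq m (mat_mult m H H) id_mat"
    unfolding feq_def
  proof (intro allI impI)
    fix i j assume ij: "i < m" "j < m"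
    have "\<And>l. H i l * H l j = id_mat i l * id_mat l j - id_mat i l * (c * w l * cnj (w j))
        - (c * w i * cnj (w l)) * id_mat l j + (c * c * w i * cnj (w j)) * (w l * cnj (w l))"
      unfolding H_def by (simp add: algebra_simps)
    hence "mat_mult m H H i j = (\<Sum>l<m. id_mat i l * id_mat l j)
        - (\<Sum>l<m. id_mat i l * (c * w l * cnj (w j))) - (\<Sum>l<m. (c * w i * cnj (w l)) * id_mat l j)
        + (c * c * w i * cnj (w j)) * (\<Sum>l<m. w l * cnj (w l))"
      unfolding mat_mult_def by (simp add: sum.distrib sum_subtractf sum_distrib_left)
    also have "\<dots> = id_mat i j - c * w i * cnj (w j) - c * w i * cnj (w j)
        + (c * c * w i * cnj (w j)) * of_real s"
      using ij by (simp add: sum_id_mat_left sum_id_mat_right norm)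
    also have "\<dots> = id_mat i j - 2 * (c * w i * cnj (w j)) + (c * w i * cnj (w j)) * (c * of_real s)"
      by (simp add: algebra_simps)
    also have "\<dots> = id_mat i j"
      unfolding cs by simp
    finally show "mat_mult m H H i j = id_mat i j" .
  qed
  then have "unitary m H"
    unfolding unitary_def herm by blast
  then show ?thesis
    unfolding H_def c_def .
qed

lemma unitary_with_first_column_reflection:
  assumes m: "0 < m" and u: "(\<Sum>i<m. u i * cnj (u i)) = 1" and "cmod (u 0) < 1"
  shows "\<exists>V. unitary m V \<and> (\<forall>i<m. V i 0 = u i)"
proof -
  define r where "r = cmod (u 0)"
  have "r < 1"
    using assms(3) unfolding r_def .
  \<comment> \<open>Reflect \<open>ph e\<^sub>0\<close> onto \<open>u\<close>; giving \<open>ph\<close> the phase of \<open>u 0\<close> makes \<open>|w|\<^sup>2 = 2 - 2 r\<close>.\<close>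
  define ph where "ph = (if u 0 = 0 then 1 else u 0 / complex_of_real r)"
  have ph: "ph * cnj ph = 1 \<and> cnj (u 0) * ph = complex_of_real r"
  proof (cases "u 0 = 0")
    case True
    then show ?thesis unfolding ph_def r_def by simp
  next
    case False
    then have "r > 0" unfolding r_def by simp
    have "u 0 * cnj (u 0) = complex_of_real (r * r)"
      unfolding r_def complex_norm_square[symmetric] by (simp add: power2_eq_square)
    then show ?thesis
      using False \<open>r > 0\<close> unfolding ph_def by (simp add: field_simps)
  qed
  define w where "w = (\<lambda>l. (if l = 0 then ph else 0) - u l)"
  have "\<And>l. w l * cnj (w l) = (if l = 0 then ph * cnj ph - ph * cnj (u l) - u l * cnj ph else 0)
      + u l * cnj (u l)"
    unfolding w_def by (simp add: algebra_simps)
  moreover have "u 0 * cnj ph = complex_of_real r"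
    using arg_cong[OF conjunct2[OF ph], of cnj] by (simp add: mult.commute)
  ultimately have w: "(\<Sum>l<m. w l * cnj (w l)) = complex_of_real (2 - 2 * r)"
    unfolding sum.distrib using m u ph by (simp add: mult.commute)
  define H where "H = (\<lambda>i j. id_mat i j - complex_of_real (2 / (2 - 2 * r)) * w i * cnj (w j))"
  have "unitary m H"
    unfolding H_def by (rule householder_unitary[OF w]) (use \<open>r < 1\<close> in simp)
  then have "unitary m (mat_mult m H (diagonal (\<lambda>_. ph)))"
    by (rule unitary_mat_mult[OF _ unitary_diagonal]) (simp add: ph)
  moreover have "\<forall>i<m. mat_mult m H (diagonal (\<lambda>_. ph)) i 0 = u i"
  proof (intro allI impI)
    fix i assume "i < m"
    have "cnj (w 0) * ph = 1 - complex_of_real r"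
      unfolding w_def using ph by (simp add: algebra_simps)
    moreover have "2 / (2 - 2 * r) * (1 - r) = 1"
      using \<open>r < 1\<close> by (simp add: field_simps)
    then have "complex_of_real (2 / (2 - 2 * r)) * (1 - complex_of_real r) = 1"
      by (metis of_real_1 of_real_diff of_real_mult)
    ultimately have "complex_of_real (2 / (2 - 2 * r)) * w i * (cnj (w 0) * ph) = w i"
      by (metis mult.commute mult.left_commute mult_1_right)
    then show "mat_mult m H (diagonal (\<lambda>_. ph)) i 0 = u i"
      unfolding mat_mult_diagonal_right[OF m] H_def w_def id_mat_def
      by (simp add: algebra_simps)
  qed
  ultimately show ?thesis by blast
qed

lemma unitary_with_first_column:
  assumes m: "0 < m" and u: "(\<Sum>i<m. u i * cnj (u i)) = 1"
  shows "\<exists>V. unitary m V \<and> (\<forall>i<m. V i 0 = u i)"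
proof (cases "cmod (u 0) < 1")
  case True
  then show ?thesis
    by (rule unitary_with_first_column_reflection[OF m u])
next
  case False
  define R where "R = (\<Sum>i\<in>{..<m}-{0}. (cmod (u i))\<^sup>2)"
  have "R \<ge> 0"
    unfolding R_def by (intro sum_nonneg) auto
  have "(\<Sum>i<m. u i * cnj (u i)) = u 0 * cnj (u 0) + (\<Sum>i\<in>{..<m}-{0}. u i * cnj (u i))"
    using m by (simp add: sum.remove)
  also have "\<dots> = complex_of_real ((cmod (u 0))\<^sup>2 + R)"
    unfolding complex_norm_square[symmetric] R_def by simp
  finally have "(cmod (u 0))\<^sup>2 + R = 1"
    using u by (metis of_real_eq_1_iff)
  moreover have "1 \<le> (cmod (u 0))\<^sup>2"
    using False by (simp add: one_le_power)
  ultimately have "R = 0" "(cmod (u 0))\<^sup>2 = 1"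
    using \<open>R \<ge> 0\<close> by linarith+
  then have rest: "\<forall>i\<in>{..<m}-{0}. (cmod (u i))\<^sup>2 = 0" and "u 0 * cnj (u 0) = 1"
    unfolding R_def complex_norm_square[symmetric] by (simp_all add: sum_nonneg_eq_0_iff)
  then have "unitary m (diagonal (\<lambda>i. if i = 0 then u 0 else 1))"
    by (intro unitary_diagonal) auto
  moreover have "\<forall>i<m. diagonal (\<lambda>i. if i = 0 then u 0 else 1) i 0 = u i"
    using rest unfolding diagonal_def by auto
  ultimately show ?thesis by blast
qed

lemma exists_eigenvector:
  fixes A :: cmat
  assumes "0 < m"
  shows "\<exists>v \<mu>. (\<exists>i<m. v i \<noteq> 0) \<and> (\<forall>i<m. (\<Sum>j<m. A i j * v j) = \<mu> * v i)"
proof -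
  define A' where "A' = Matrix.mat m m (\<lambda>(i, j). A i j)"
  have "A' \<in> carrier_mat m m"
    unfolding A'_def by auto
  from spectrum_non_empty[OF this assms] obtain \<mu> where "eigenvalue A' \<mu>"
    unfolding spectrum_def by auto
  then obtain v where "eigenvector A' v \<mu>"
    unfolding eigenvalue_def by auto
  then have v: "v \<in> carrier_vec m" "v \<noteq> 0\<^sub>v m" "A' *\<^sub>v v = \<mu> \<cdot>\<^sub>v v"
    unfolding eigenvector_def A'_def by auto
  have "\<exists>i<m. v $ i \<noteq> 0"
  proof (rule ccontr)
    assume "\<not> ?thesis"
    then have "v = 0\<^sub>v m" using v(1) by (intro eq_vecI) auto
    with v(2) show False by simp
  qed
  moreover have "\<forall>i<m. (\<Sum>j<m. A i j * v $ j) = \<mu> * v $ i"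
  proof (intro allI impI)
    fix i assume i: "i < m"
    have "(A' *\<^sub>v v) $ i = (\<mu> \<cdot>\<^sub>v v) $ i" using v(3) by simp
    then show "(\<Sum>j<m. A i j * v $ j) = \<mu> * v $ i"
      using i v(1) by (auto simp: A'_def scalar_prod_def row_def lessThan_atLeast0 intro!: sum.cong)
  qed
  ultimately show ?thesis by blast
qed

lemma exists_unit_eigenvector:
  fixes A :: cmat
  assumes "0 < m"
  shows "\<exists>u \<mu>. (\<Sum>i<m. u i * cnj (u i)) = 1 \<and> (\<forall>i<m. (\<Sum>j<m. A i j * u j) = \<mu> * u i)"
proof -
  obtain v \<mu> where v: "\<exists>i<m. v i \<noteq> 0" and ev: "\<forall>i<m. (\<Sum>j<m. A i j * v j) = \<mu> * v i"
    using exists_eigenvector[OF assms] by blast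
  define N where "N = (\<Sum>i<m. (cmod (v i))\<^sup>2)"
  have "N > 0"
    using v unfolding N_def by (auto intro: sum_pos2)
  define s where "s = complex_of_real (sqrt N)"
  have "s \<noteq> 0" and s: "s * cnj s = complex_of_real N"
    unfolding s_def using \<open>N > 0\<close> by (simp_all flip: of_real_mult)
  define u where "u = (\<lambda>i. v i / s)"
  have "(\<Sum>i<m. u i * cnj (u i)) = (\<Sum>i<m. complex_of_real ((cmod (v i))\<^sup>2)) / complex_of_real N"
    unfolding u_def complex_norm_square s[symmetric] sum_divide_distrib by simp
  also have "(\<Sum>i<m. complex_of_real ((cmod (v i))\<^sup>2)) = complex_of_real N"
    unfolding N_def by (simp only: of_real_sum)
  also have "complex_of_real N / complex_of_real N = 1"
    using \<open>N > 0\<close> by simp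
  finally have "(\<Sum>i<m. u i * cnj (u i)) = 1" .
  moreover have "\<forall>i<m. (\<Sum>j<m. A i j * u j) = \<mu> * u i"
    using ev unfolding u_def by (simp add: sum_divide_distrib[symmetric])
  ultimately show ?thesis by blast
qed

lemma hermitian_unitary_congruence:
  "hermitian m A \<Longrightarrow> hermitian m (mat_mult m (conj_form V) (mat_mult m A V))"
  unfolding hermitian_def conj_form_mat_mult conj_form_conj_form mat_mult_assoc
  by (rule mat_mult_cong[OF feq_refl mat_mult_cong[OF _ feq_refl]])

lemma hermitian_block_of_first_column:
  assumes hB: "hermitian (Suc m) B" and B0: "\<And>i. i < Suc m \<Longrightarrow> B i 0 = \<mu> * id_mat i 0"
  shows "hermitian m (\<lambda>i j. B (Suc i) (Suc j)) \<and>
    feq (Suc m) B (diag_block (of_real (Re \<mu>)) (\<lambda>i j. B (Suc i) (Suc j)))"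
proof -
  have B0': "B 0 j = cnj \<mu> * id_mat 0 j" if "j < Suc m" for j
  proof -
    have "B 0 j = cnj (B j 0)"
      using hB that unfolding hermitian_def feq_def conj_form_def by simp
    also have "\<dots> = cnj \<mu> * id_mat 0 j"
      using B0[OF that] by (simp add: id_mat_def)
    finally show ?thesis .
  qed
  have "cnj \<mu> = \<mu>"
    using B0[of 0] B0'[of 0] by (simp add: id_mat_def)
  then have "complex_of_real (Re \<mu>) = \<mu>"
    by (simp add: Reals_cnj_iff[symmetric])
  then show ?thesis
    using hB B0 B0' \<open>cnj \<mu> = \<mu>\<close>
    unfolding hermitian_def feq_def diag_block_def conj_form_def by (auto simp: id_mat_def)
qed

lemma hermitian_deflation:
  assumes A: "hermitian (Suc m) A"
  shows "\<exists>V (\<mu>::real) B. unitary (Suc m) V \<and> hermitian m B \<and>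
    feq (Suc m) (mat_mult (Suc m) (conj_form V) (mat_mult (Suc m) A V)) (diag_block (of_real \<mu>) B)"
proof -
  let ?n = "Suc m"
  obtain u \<mu> where u: "(\<Sum>i<?n. u i * cnj (u i)) = 1" and eu: "\<forall>i<?n. (\<Sum>j<?n. A i j * u j) = \<mu> * u i"
    using exists_unit_eigenvector[of ?n A] by auto
  obtain V where V: "unitary ?n V" and V0: "\<forall>i<?n. V i 0 = u i"
    using unitary_with_first_column[OF _ u] by auto
  define B where "B = mat_mult ?n (conj_form V) (mat_mult ?n A V)"
  have B0: "B i 0 = \<mu> * id_mat i 0" if "i < ?n" for i
  proof -
    have "B i 0 = (\<Sum>l<?n. conj_form V i l * (\<mu> * V l 0))"
      using eu V0 unfolding B_def mat_mult_def by simp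
    also have "\<dots> = \<mu> * mat_mult ?n (conj_form V) V i 0"
      unfolding mat_mult_def by (simp add: sum_distrib_left algebra_simps)
    also have "\<dots> = \<mu> * id_mat i 0"
      using V that unfolding unitary_def feq_def by simp
    finally show ?thesis .
  qed
  have "hermitian ?n B"
    unfolding B_def by (rule hermitian_unitary_congruence[OF A])
  from hermitian_block_of_first_column[OF this B0] V show ?thesis
    unfolding B_def by blast
qed

lemma hermitian_unitarily_diagonalizable:
  "hermitian m A \<Longrightarrow> \<exists>U d. unitary m U \<and>
     feq m (mat_mult m (conj_form U) (mat_mult m A U)) (diagonal (\<lambda>i. complex_of_real (d i)))"
proof (induction m arbitrary: A)
  case 0
  have "unitary 0 id_mat"
    unfolding unitary_def feq_def by simp
  then show ?case
    unfolding feq_def by blast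
next
  case (Suc m)
  obtain V \<mu> B where V: "unitary (Suc m) V" and "hermitian m B"
    and VAV: "feq (Suc m) (mat_mult (Suc m) (conj_form V) (mat_mult (Suc m) A V)) (diag_block (of_real \<mu>) B)"
    using hermitian_deflation[OF Suc.prems] by blast
  obtain W d where W: "unitary m W"
    and WBW: "feq m (mat_mult m (conj_form W) (mat_mult m B W)) (diagonal (\<lambda>i. complex_of_real (d i)))"
    using Suc.IH[OF \<open>hermitian m B\<close>] by blast
  define U where "U = mat_mult (Suc m) V (diag_block 1 W)"
  have "feq (Suc m) (mat_mult (Suc m) (conj_form U) (mat_mult (Suc m) A U))
      (mat_mult (Suc m) (diag_block 1 (conj_form W))
        (mat_mult (Suc m) (mat_mult (Suc m) (conj_form V) (mat_mult (Suc m) A V)) (diag_block 1 W)))"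
    unfolding U_def by (simp add: conj_form_mat_mult conj_form_diag_block mat_mult_assoc)
  also have "feq (Suc m) \<dots> (mat_mult (Suc m) (diag_block 1 (conj_form W))
      (mat_mult (Suc m) (diag_block (of_real \<mu>) B) (diag_block 1 W)))"
    by (intro mat_mult_cong VAV feq_refl)
  also have "feq (Suc m) \<dots> (diag_block (of_real \<mu>) (diagonal (\<lambda>i. complex_of_real (d i))))"
    unfolding mat_mult_diag_block by (simp add: diag_block_cong[OF WBW])
  also have "feq (Suc m) \<dots> (diagonal (\<lambda>i. complex_of_real (case_nat \<mu> d i)))"
    using diag_block_diagonal[of "\<lambda>i. complex_of_real (case_nat \<mu> d i)"] by simp
  finally show ?case
    using unitary_mat_mult[OF V unitary_diag_block[OF W]] unfolding U_def by blast
qed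

section \<open>Positive definite matrices\<close>

definition quad_form :: "nat \<Rightarrow> cmat \<Rightarrow> (nat \<Rightarrow> complex) \<Rightarrow> complex" where
  "quad_form m A x = (\<Sum>i<m. \<Sum>j<m. x i * A i j * cnj (x j))"

definition pos_def :: "nat \<Rightarrow> cmat \<Rightarrow> bool" where
  "pos_def m A \<longleftrightarrow> (\<forall>x. (\<exists>i<m. x i \<noteq> 0) \<longrightarrow> 0 < Re (quad_form m A x))"

lemma kahler_hermitian: "kahler n h \<Longrightarrow> hermitian n h"
  unfolding kahler_def hermitian_def feq_def conj_form_def by (auto simp: mult.commute)

lemma kahler_pos_def:
  assumes "kahler n h"
  shows "pos_def n h"
  unfolding pos_def_def
proof (intro allI impI)
  obtain A where A: "invertible_n n A" and hA: "feq n h (\<lambda>a b. \<Sum>l<n. A l a * cnj (A l b))"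
    using assms unfolding kahler_def by blast
  fix x :: "nat \<Rightarrow> complex"
  assume "\<exists>i<n. x i \<noteq> 0"
  define y where "y = (\<lambda>l. \<Sum>a<n. A l a * x a)"
  obtain l where "l < n" "y l \<noteq> 0"
    using invertible_n_apply_nonzero[OF A \<open>\<exists>i<n. x i \<noteq> 0\<close>] unfolding y_def by blast
  have "quad_form n h x = (\<Sum>a<n. \<Sum>b<n. \<Sum>l<n. (A l a * x a) * (cnj (A l b) * cnj (x b)))"
    unfolding quad_form_def using hA unfolding feq_def
    by (intro sum.cong refl) (simp add: sum_distrib_left sum_distrib_right algebra_simps)
  also have "\<dots> = (\<Sum>l<n. \<Sum>a<n. \<Sum>b<n. (A l a * x a) * (cnj (A l b) * cnj (x b)))"
    by (rule sum_swap3[symmetric])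
  also have "\<dots> = (\<Sum>l<n. complex_of_real ((cmod (y l))\<^sup>2))"
    unfolding y_def cnj_sum complex_norm_square by (simp add: sum_product)
  finally have "Re (quad_form n h x) = (\<Sum>l<n. (cmod (y l))\<^sup>2)"
    by (simp add: Re_sum)
  also have "\<dots> > 0"
    using \<open>l < n\<close> \<open>y l \<noteq> 0\<close> by (intro sum_pos2[of _ l]) auto
  finally show "0 < Re (quad_form n h x)" .
qed

lemma pos_def_diag_pos:
  assumes "pos_def m A" "a < m"
  shows "0 < Re (A a a)"
proof -
  define x where "x = (\<lambda>i. if i = a then (1::complex) else 0)"
  have "quad_form m A x = (\<Sum>i<m. \<Sum>j<m. (if i = a then 1 else 0) * A i j * (if j = a then 1 else 0))"
    unfolding quad_form_def x_def by (intro sum.cong refl) simp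
  also have "\<dots> = A a a"
    using assms(2) by (simp add: mult_delta_left mult_delta_right)
  finally have "quad_form m A x = A a a" .
  moreover have "0 < Re (quad_form m A x)"
    using assms unfolding pos_def_def x_def by auto
  ultimately show ?thesis by simp
qed

lemma pos_def_trace_pos: "pos_def m A \<Longrightarrow> 0 < m \<Longrightarrow> 0 < Re (form_trace m A)"
  unfolding form_trace_def Re_sum by (intro sum_pos) (auto intro: pos_def_diag_pos)

lemma pos_def_eigenvalues_pos:
  assumes U: "unitary m U"
    and D: "feq m (mat_mult m (conj_form U) (mat_mult m A U)) (diagonal (\<lambda>i. complex_of_real (d i)))"
    and "pos_def m A" and "i < m"
  shows "0 < d i"
proof -
  define x where "x = (\<lambda>p. cnj (U p i))"
  have "quad_form m A x = mat_mult m (conj_form U) (mat_mult m A U) i i"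
    unfolding quad_form_def mat_mult_def conj_form_def x_def by (simp add: sum_distrib_left mult.assoc)
  also have "\<dots> = complex_of_real (d i)"
    using D \<open>i < m\<close> unfolding feq_def diagonal_def by simp
  finally have q: "quad_form m A x = complex_of_real (d i)" .
  have "\<exists>p<m. x p \<noteq> 0"
  proof (rule ccontr)
    assume "\<not> ?thesis"
    then have "mat_mult m (conj_form U) U i i = 0"
      unfolding mat_mult_def conj_form_def x_def by simp
    moreover have "mat_mult m (conj_form U) U i i = 1"
      using U \<open>i < m\<close> unfolding unitary_def feq_def id_mat_def by simp
    ultimately show False by simp
  qed
  then have "0 < Re (quad_form m A x)"
    using \<open>pos_def m A\<close> unfolding pos_def_def by blast
  then show ?thesis
    using q by simp
qed

section \<open>Primitive forms\<close>

lemma permutes_eq_if_eq_off_0: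
  assumes s: "\<sigma> permutes {..<n}" and t: "\<tau> permutes {..<n}"
    and eq: "\<And>j. j < n \<Longrightarrow> j \<noteq> 0 \<Longrightarrow> \<sigma> j = \<tau> j"
  shows "\<sigma> = \<tau>"
proof (rule ext)
  fix x
  show "\<sigma> x = \<tau> x"
  proof (cases "x < n \<and> x = 0")
    case False
    then show ?thesis
      using eq s t by (metis lessThan_iff permutes_not_in)
  next
    case True
    then obtain y where y: "y < n" "\<sigma> y = \<tau> 0"
      using permutes_in_image[OF t, of 0] permutes_image[OF s] by (metis imageE lessThan_iff)
    have "y = 0"
    proof (rule ccontr)
      assume "y \<noteq> 0"
      then have "\<tau> y = \<tau> 0" using eq y by metis
      with \<open>y \<noteq> 0\<close> show False
        using permutes_inj[OF t] by (simp add: inj_eq)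
    qed
    with True y show ?thesis by simp
  qed
qed

lemma card_permutes_with_value_at_0:
  fixes a n :: nat
  assumes "a < n"
  shows "card {\<sigma>. \<sigma> permutes {..<n} \<and> \<sigma> 0 = a} = card {\<sigma>. \<sigma> permutes {..<n} \<and> \<sigma> 0 = 0}"
proof -
  let ?f = "\<lambda>\<sigma>. Transposition.transpose 0 a \<circ> \<sigma>"
  have swap: "?f \<sigma> permutes {..<n}" if "\<sigma> permutes {..<n}" for \<sigma>
    by (rule permutes_compose[OF that permutes_swap_id]) (use assms in auto)
  have "bij_betw ?f {\<sigma>. \<sigma> permutes {..<n} \<and> \<sigma> 0 = 0} {\<sigma>. \<sigma> permutes {..<n} \<and> \<sigma> 0 = a}"
  proof (rule bij_betw_byWitness[where f' = ?f])
    have "\<And>\<sigma>. ?f (?f \<sigma>) = \<sigma>"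
      by (simp add: fun_eq_iff)
    then show "\<forall>\<sigma>\<in>{\<sigma>. \<sigma> permutes {..<n} \<and> \<sigma> 0 = 0}. ?f (?f \<sigma>) = \<sigma>"
      and "\<forall>\<sigma>\<in>{\<sigma>. \<sigma> permutes {..<n} \<and> \<sigma> 0 = a}. ?f (?f \<sigma>) = \<sigma>"
      by blast+
    show "?f ` {\<sigma>. \<sigma> permutes {..<n} \<and> \<sigma> 0 = 0} \<subseteq> {\<sigma>. \<sigma> permutes {..<n} \<and> \<sigma> 0 = a}"
      using swap by auto
    show "?f ` {\<sigma>. \<sigma> permutes {..<n} \<and> \<sigma> 0 = a} \<subseteq> {\<sigma>. \<sigma> permutes {..<n} \<and> \<sigma> 0 = 0}"
      using swap by auto
  qed
  then show ?thesis
    by (simp add: bij_betw_same_card)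
qed

lemma sum_permutes_value_at_0:
  fixes f :: "nat \<Rightarrow> 'a::comm_semiring_1"
  assumes "n \<ge> 1"
  shows "(\<Sum>\<sigma>\<in>{\<sigma>. \<sigma> permutes {..<n}}. f (\<sigma> 0))
    = of_nat (card {\<sigma>. \<sigma> permutes {..<n} \<and> \<sigma> 0 = 0}) * (\<Sum>a<n. f a)"
proof -
  let ?P = "{\<sigma>. \<sigma> permutes {..<n}}"
  let ?c = "card {\<sigma>. \<sigma> permutes {..<n} \<and> \<sigma> 0 = 0}"
  have "(\<Sum>\<sigma>\<in>?P. f (\<sigma> 0)) = (\<Sum>\<sigma>\<in>?P. \<Sum>a<n. if \<sigma> 0 = a then f a else 0)"
  proof (intro sum.cong refl)
    fix \<sigma> assume "\<sigma> \<in> ?P"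
    then have "\<sigma> 0 < n"
      using assms permutes_in_image[of \<sigma> "{..<n}" 0] by simp
    then show "f (\<sigma> 0) = (\<Sum>a<n. if \<sigma> 0 = a then f a else 0)"
      by simp
  qed
  also have "\<dots> = (\<Sum>a<n. \<Sum>\<sigma>\<in>?P. if \<sigma> 0 = a then f a else 0)"
    by (rule sum.swap)
  also have "\<dots> = (\<Sum>a<n. of_nat ?c * f a)"
  proof (intro sum.cong refl)
    fix a assume "a \<in> {..<n}"
    have "(\<Sum>\<sigma>\<in>?P. if \<sigma> 0 = a then f a else 0) = (\<Sum>\<sigma>\<in>{\<sigma>\<in>?P. \<sigma> 0 = a}. f a)"
      by (rule sum.inter_filter[symmetric]) (simp add: finite_permutations)
    also have "{\<sigma>\<in>?P. \<sigma> 0 = a} = {\<sigma>. \<sigma> permutes {..<n} \<and> \<sigma> 0 = a}"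
      by auto
    finally show "(\<Sum>\<sigma>\<in>?P. if \<sigma> 0 = a then f a else 0) = of_nat ?c * f a"
      using card_permutes_with_value_at_0[of a n] \<open>a \<in> {..<n}\<close> by simp
  qed
  finally show ?thesis
    by (simp add: sum_distrib_left)
qed

lemma wedge_top_omega_power:
  fixes h :: form
  assumes "n \<ge> 1"
  shows "wedge_top n (\<lambda>j. if j = 0 then h else omega)
    = of_nat (card {\<sigma>. \<sigma> permutes {..<n} \<and> \<sigma> 0 = 0}) * form_trace n h"
proof -
  let ?P = "{\<sigma>. \<sigma> permutes {..<n}}"
  let ?H = "\<lambda>j. if j = 0 then h else omega"
  obtain n' where n': "n = Suc n'" using assms by (cases n) auto
  \<comment> \<open>A term survives only if \<open>\<sigma>\<close> and \<open>\<tau>\<close> agree off \<open>0\<close>, hence everywhere.\<close>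
  have prod_eq: "(\<Prod>j<n. ?H j (\<sigma> j) (\<tau> j)) = (if \<sigma> = \<tau> then h (\<sigma> 0) (\<sigma> 0) else 0)"
    if "\<sigma> \<in> ?P" "\<tau> \<in> ?P" for \<sigma> \<tau>
  proof (cases "\<sigma> = \<tau>")
    case True
    then show ?thesis
      unfolding n' prod.lessThan_Suc_shift by (simp add: omega_def)
  next
    case False
    then have "\<not> (\<forall>j<n. j \<noteq> 0 \<longrightarrow> \<sigma> j = \<tau> j)"
      using permutes_eq_if_eq_off_0[of \<sigma> n \<tau>] that by blast
    then obtain j where "j < n" "j \<noteq> 0" "\<sigma> j \<noteq> \<tau> j"
      by blast
    then have "(\<Prod>j<n. ?H j (\<sigma> j) (\<tau> j)) = 0"
      by (intro prod_zero) (auto simp: omega_def intro!: bexI[of _ j])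
    with False show ?thesis by simp
  qed
  have "wedge_top n ?H = (\<Sum>\<sigma>\<in>?P. \<Sum>\<tau>\<in>?P. if \<sigma> = \<tau> then h (\<sigma> 0) (\<sigma> 0) else 0)"
    unfolding wedge_top_def by (intro sum.cong refl) (auto simp: prod_eq simp flip: of_int_mult)
  also have "\<dots> = (\<Sum>\<sigma>\<in>?P. h (\<sigma> 0) (\<sigma> 0))"
    by (simp add: sum.delta finite_permutations)
  also have "\<dots> = of_nat (card {\<sigma>. \<sigma> permutes {..<n} \<and> \<sigma> 0 = 0}) * form_trace n h"
    unfolding form_trace_def by (rule sum_permutes_value_at_0[OF assms, of "\<lambda>a. h a a"])
  finally show ?thesis .
qed

lemma primitive_iff_trace_zero:
  assumes "n \<ge> 1"
  shows "primitive n h \<longleftrightarrow> form_trace n h = 0"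
proof -
  have "finite {\<sigma>. \<sigma> permutes {..<n} \<and> \<sigma> 0 = 0}"
    by (rule finite_subset[OF _ finite_permutations[of "{..<n}"]]) auto
  moreover have "id \<in> {\<sigma>. \<sigma> permutes {..<n} \<and> \<sigma> 0 = 0}"
    by (simp add: permutes_id)
  ultimately have "card {\<sigma>. \<sigma> permutes {..<n} \<and> \<sigma> 0 = 0} \<noteq> 0"
    by (metis card_0_eq empty_iff)
  then show ?thesis
    unfolding primitive_def wedge_top_omega_power[OF assms] by simp
qed

section \<open>Congruence to the identity\<close>

lemma pos_def_gram_factor:
  assumes "hermitian k T" "pos_def k T"
  shows "\<exists>R S. feq k (mat_mult k R (conj_form R)) T \<and>
    feq k (mat_mult k S R) id_mat \<and> feq k (mat_mult k R S) id_mat"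
proof -
  obtain U d where U: "unitary k U"
    and D: "feq k (mat_mult k (conj_form U) (mat_mult k T U)) (diagonal (\<lambda>i. complex_of_real (d i)))"
    using hermitian_unitarily_diagonalizable[OF assms(1)] by blast
  have d: "0 < d i" if "i < k" for i
    by (rule pos_def_eigenvalues_pos[OF U D assms(2) that])
  define r where "r = (\<lambda>i. complex_of_real (sqrt (d i)))"
  define r' where "r' = (\<lambda>i. complex_of_real (1 / sqrt (d i)))"
  have rH: "conj_form (diagonal r) = diagonal r"
    unfolding conj_form_diagonal r_def by simp
  have rr: "feq k (mat_mult k (diagonal r) (diagonal r)) (diagonal (\<lambda>i. complex_of_real (d i)))"
    using mat_mult_diagonal_diagonal[of k r r] d
    unfolding feq_def diagonal_def r_def by (auto simp: abs_of_pos simp flip: of_real_mult)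
  have r'r: "feq k (mat_mult k (diagonal r') (diagonal r)) id_mat"
    and rr': "feq k (mat_mult k (diagonal r) (diagonal r')) id_mat"
    using mat_mult_diagonal_diagonal[of k r' r] mat_mult_diagonal_diagonal[of k r r'] d
    unfolding feq_def diagonal_def id_mat_def r_def r'_def by (auto simp flip: of_real_mult) (metis d less_irrefl)+
  define R where "R = mat_mult k U (diagonal r)"
  define S where "S = mat_mult k (diagonal r') (conj_form U)"
  have "feq k (mat_mult k R (conj_form R))
      (mat_mult k U (mat_mult k (mat_mult k (diagonal r) (diagonal r)) (conj_form U)))"
    unfolding R_def by (simp add: conj_form_mat_mult rH mat_mult_assoc)
  also have "feq k \<dots> (mat_mult k U (mat_mult k (mat_mult k (conj_form U) (mat_mult k T U)) (conj_form U)))"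
    by (rule mat_mult_cong[OF feq_refl mat_mult_cong[OF feq_trans[OF rr feq_sym[OF D]] feq_refl]])
  also have "feq k \<dots> T"
    by (rule unitary_conjugate_back[OF U])
  finally have "feq k (mat_mult k R (conj_form R)) T" .
  moreover have "feq k (mat_mult k S R) id_mat"
  proof -
    have "feq k (mat_mult k S R)
        (mat_mult k (diagonal r') (mat_mult k (conj_form U) (mat_mult k U (diagonal r))))"
      unfolding R_def S_def by (simp add: mat_mult_assoc)
    also have "feq k \<dots> (mat_mult k (diagonal r') (diagonal r))"
      by (rule mat_mult_cong[OF feq_refl unitary_cancel_left[OF U]])
    finally show ?thesis
      using r'r by (rule feq_trans)
  qed
  moreover have "feq k (mat_mult k R S) id_mat"
  proof -
    have "feq k (mat_mult k R S) (mat_mult k U (mat_mult k (mat_mult k (diagonal r) (diagonal r')) (conj_form U)))"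
      unfolding R_def S_def by (simp add: mat_mult_assoc)
    also have "feq k \<dots> (mat_mult k U (conj_form U))"
      by (rule mat_mult_cancel_middle[OF rr'])
    also have "feq k \<dots> id_mat"
      using U unfolding unitary_def by simp
    finally show ?thesis .
  qed
  ultimately show ?thesis by blast
qed

lemma inverse_factor_congruence:
  assumes RR: "feq k (mat_mult k R (conj_form R)) T" and SR: "feq k (mat_mult k S R) id_mat"
  shows "feq k (mat_mult k S (mat_mult k T (conj_form S))) id_mat"
proof -
  have "feq k (mat_mult k S (mat_mult k T (conj_form S)))
      (mat_mult k S (mat_mult k (mat_mult k R (conj_form R)) (conj_form S)))"
    by (rule mat_mult_cong[OF feq_refl mat_mult_cong[OF feq_sym[OF RR] feq_refl]])
  also have "feq k \<dots> (mat_mult k (mat_mult k S R) (conj_form (mat_mult k S R)))"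
    by (simp add: conj_form_mat_mult mat_mult_assoc)
  also have "feq k \<dots> (mat_mult k id_mat id_mat)"
    using mat_mult_cong[OF SR conj_form_cong[OF SR]] by simp
  also have "feq k \<dots> id_mat"
    by (rule mat_mult_id_left)
  finally show ?thesis .
qed

lemma invertible_n_unitary_mult:
  assumes V: "unitary k V" and SR: "feq k (mat_mult k S R) id_mat" and RS: "feq k (mat_mult k R S) id_mat"
  shows "invertible_n k (mat_mult k (conj_form V) S)"
proof (rule invertible_n_if_inverse)
  have "feq k (mat_mult k (mat_mult k (conj_form V) S) (mat_mult k R V))
      (mat_mult k (conj_form V) (mat_mult k (mat_mult k S R) V))"
    by (simp add: mat_mult_assoc)
  also have "feq k \<dots> (mat_mult k (conj_form V) V)"
    by (rule mat_mult_cancel_middle[OF SR])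
  also have "feq k \<dots> id_mat"
    using V unfolding unitary_def by simp
  finally show "feq k (mat_mult k (mat_mult k (conj_form V) S) (mat_mult k R V)) id_mat" .
  have "feq k (mat_mult k (mat_mult k R V) (mat_mult k (conj_form V) S))
      (mat_mult k R (mat_mult k (mat_mult k V (conj_form V)) S))"
    by (simp add: mat_mult_assoc)
  also have "feq k \<dots> (mat_mult k R S)"
    by (rule mat_mult_cancel_middle) (use V in \<open>simp add: unitary_def\<close>)
  finally show "feq k (mat_mult k (mat_mult k R V) (mat_mult k (conj_form V) S)) id_mat"
    using RS by (rule feq_trans)
qed

lemma congruence_to_identity_fixing_first_row:
  assumes "hermitian k T" "pos_def k T" "T 0 0 = 1" "0 < k"
  shows "\<exists>C. invertible_n k C \<and> (\<forall>j<k. C 0 j = id_mat 0 j) \<and>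
    feq k (mat_mult k C (mat_mult k T (conj_form C))) id_mat"
proof -
  obtain R S where RR: "feq k (mat_mult k R (conj_form R)) T"
    and SR: "feq k (mat_mult k S R) id_mat" and RS: "feq k (mat_mult k R S) id_mat"
    using pos_def_gram_factor[OF assms(1,2)] by blast
  \<comment> \<open>Any \<open>W S\<close> with \<open>W\<close> unitary works; the first row of \<open>W\<close> is chosen to be that of \<open>R\<close>.\<close>
  have "(\<Sum>j<k. cnj (R 0 j) * cnj (cnj (R 0 j))) = mat_mult k R (conj_form R) 0 0"
    unfolding mat_mult_def conj_form_def by (simp add: mult.commute)
  also have "\<dots> = 1"
    using RR assms(3,4) unfolding feq_def by simp
  finally obtain V where V: "unitary k V" and V0: "\<forall>j<k. V j 0 = cnj (R 0 j)"
    using unitary_with_first_column[OF assms(4), of "\<lambda>j. cnj (R 0 j)"] by auto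
  define C where "C = mat_mult k (conj_form V) S"
  have "\<forall>j<k. C 0 j = id_mat 0 j"
  proof (intro allI impI)
    fix j assume "j < k"
    have "C 0 j = mat_mult k R S 0 j"
      unfolding C_def mat_mult_def conj_form_def using V0 by simp
    then show "C 0 j = id_mat 0 j"
      using RS \<open>j < k\<close> assms(4) unfolding feq_def by simp
  qed
  moreover have "feq k (mat_mult k C (mat_mult k T (conj_form C))) id_mat"
  proof -
    have "feq k (mat_mult k C (mat_mult k T (conj_form C)))
        (mat_mult k (conj_form V) (mat_mult k (mat_mult k S (mat_mult k T (conj_form S))) V))"
      unfolding C_def by (simp add: conj_form_mat_mult mat_mult_assoc)
    also have "feq k \<dots> (mat_mult k (conj_form V) V)"
      by (rule mat_mult_cancel_middle[OF inverse_factor_congruence[OF RR SR]])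
    also have "feq k \<dots> id_mat"
      using V unfolding unitary_def by simp
    finally show ?thesis .
  qed
  moreover have "invertible_n k C"
    unfolding C_def by (rule invertible_n_unitary_mult[OF V SR RS])
  ultimately show ?thesis by blast
qed

section \<open>The trace matrix\<close>

definition trace_matrix :: "nat \<Rightarrow> (nat \<Rightarrow> nat \<Rightarrow> form) \<Rightarrow> cmat" where
  "trace_matrix n M = (\<lambda>i j. form_trace n (M i j) / of_nat n)"

lemma griffiths_positive_entry_conj:
  "griffiths_positive n k M \<Longrightarrow> i < k \<Longrightarrow> j < k \<Longrightarrow> a < n \<Longrightarrow> b < n \<Longrightarrow> M i j a b = cnj (M j i b a)"
  unfolding griffiths_positive_def feq_def conj_form_def by blast

lemma griffiths_positive_kahler:
  "griffiths_positive n k M \<Longrightarrow> \<exists>i<k. \<theta> i \<noteq> 0 \<Longrightarrow>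
    kahler n (\<lambda>a b. \<Sum>i<k. \<Sum>j<k. \<theta> i * M i j a b * cnj (\<theta> j))"
  unfolding griffiths_positive_def by blast

lemma trace_matrix_hermitian:
  assumes "griffiths_positive n k M"
  shows "hermitian k (trace_matrix n M)"
  unfolding hermitian_def feq_def
proof (intro allI impI)
  fix i j assume "i < k" "j < k"
  then have "\<forall>a<n. cnj (M j i a a) = M i j a a"
    using griffiths_positive_entry_conj[OF assms \<open>i < k\<close> \<open>j < k\<close>] by simp
  then show "conj_form (trace_matrix n M) i j = trace_matrix n M i j"
    unfolding conj_form_def trace_matrix_def form_trace_def by (simp add: cnj_sum)
qed

lemma trace_matrix_pos_def:
  assumes "n \<ge> 1" "griffiths_positive n k M"
  shows "pos_def k (trace_matrix n M)"
  unfolding pos_def_def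
proof (intro allI impI)
  fix \<theta> :: "nat \<Rightarrow> complex"
  assume "\<exists>i<k. \<theta> i \<noteq> 0"
  define H where "H = (\<lambda>a b. \<Sum>i<k. \<Sum>j<k. \<theta> i * M i j a b * cnj (\<theta> j))"
  have "0 < Re (form_trace n H)"
    unfolding H_def using assms \<open>\<exists>i<k. \<theta> i \<noteq> 0\<close>
    by (intro pos_def_trace_pos kahler_pos_def griffiths_positive_kahler) auto
  have "quad_form k (trace_matrix n M) \<theta> = (\<Sum>i<k. \<Sum>j<k. \<Sum>a<n. \<theta> i * M i j a a * cnj (\<theta> j)) / of_nat n"
    unfolding quad_form_def trace_matrix_def form_trace_def
    by (simp add: sum_distrib_left sum_distrib_right sum_divide_distrib)
  also have "\<dots> = form_trace n H / of_nat n"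
    unfolding H_def form_trace_def
    by (rule arg_cong[where f = "\<lambda>x. x / of_nat n"], rule sum_swap3[symmetric])
  finally show "0 < Re (quad_form k (trace_matrix n M) \<theta>)"
    using \<open>0 < Re (form_trace n H)\<close> assms(1) by (simp add: Re_divide_of_nat)
qed

lemma trace_matrix_0_0: "n \<ge> 1 \<Longrightarrow> feq n (M 0 0) omega \<Longrightarrow> trace_matrix n M 0 0 = 1"
  unfolding trace_matrix_def form_trace_def feq_def omega_def by simp

lemma form_trace_congr:
  assumes "n \<ge> 1"
  shows "form_trace n (congr k C M i j)
    = of_nat n * mat_mult k C (mat_mult k (trace_matrix n M) (conj_form C)) i j"
proof -
  have "form_trace n (congr k C M i j) = (\<Sum>p<k. \<Sum>q<k. \<Sum>a<n. C i p * M p q a a * cnj (C j q))"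
    unfolding form_trace_def congr_def by (rule sum_swap3)
  also have "\<dots> = (\<Sum>p<k. \<Sum>q<k. of_nat n * (C i p * trace_matrix n M p q * cnj (C j q)))"
  proof (intro sum.cong refl)
    fix p q
    have "of_nat n * (C i p * (form_trace n (M p q) / of_nat n) * cnj (C j q))
        = C i p * form_trace n (M p q) * cnj (C j q)"
      using assms by (simp add: field_simps)
    then show "(\<Sum>a<n. C i p * M p q a a * cnj (C j q))
        = of_nat n * (C i p * trace_matrix n M p q * cnj (C j q))"
      unfolding trace_matrix_def form_trace_def by (simp add: sum_distrib_left sum_distrib_right)
  qed
  also have "\<dots> = of_nat n * mat_mult k C (mat_mult k (trace_matrix n M) (conj_form C)) i j"
    unfolding mat_mult_def conj_form_def by (simp add: sum_distrib_left mult.assoc)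
  finally show ?thesis .
qed

lemma congr_hermitian:
  assumes "griffiths_positive n k M" "i < k" "j < k"
  shows "feq n (congr k C M j i) (conj_form (congr k C M i j))"
  unfolding feq_def
proof (intro allI impI)
  fix a b assume "a < n" "b < n"
  have "conj_form (congr k C M i j) a b = (\<Sum>p<k. \<Sum>q<k. cnj (C i p) * cnj (M p q b a) * C j q)"
    unfolding conj_form_def congr_def by (simp add: cnj_sum)
  also have "\<dots> = (\<Sum>p<k. \<Sum>q<k. cnj (C i p) * M q p a b * C j q)"
  proof (intro sum.cong refl)
    fix p q assume "p \<in> {..<k}" "q \<in> {..<k}"
    then have "M q p a b = cnj (M p q b a)"
      using \<open>a < n\<close> \<open>b < n\<close> by (intro griffiths_positive_entry_conj[OF assms(1)]) auto
    then show "cnj (C i p) * cnj (M p q b a) * C j q = cnj (C i p) * M q p a b * C j q"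
      by simp
  qed
  also have "\<dots> = congr k C M j i a b"
    unfolding congr_def by (subst sum.swap) (simp add: algebra_simps)
  finally show "congr k C M j i a b = conj_form (congr k C M i j) a b" ..
qed

lemma congr_0_0:
  assumes "0 < k" "\<forall>j<k. C 0 j = id_mat 0 j"
  shows "congr k C M 0 0 = M 0 0"
proof (intro ext)
  fix a b
  have "congr k C M 0 0 a b = (\<Sum>p<k. \<Sum>q<k. id_mat 0 p * M p q a b * id_mat q 0)"
    unfolding congr_def using assms(2) by (intro sum.cong refl) (simp add: id_mat_def)
  then show "congr k C M 0 0 a b = M 0 0 a b"
    using assms(1) by (simp add: sum_id_mat_left sum_id_mat_right)
qed

lemma kahler_congr_diag:
  assumes "griffiths_positive n k M" "invertible_n k C" "i < k"
  shows "kahler n (congr k C M i i)"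
proof -
  obtain B where B: "\<forall>a<k. \<forall>b<k. (\<Sum>c<k. C a c * B c b) = (if a = b then 1 else 0)"
    using assms(2) unfolding invertible_n_def by blast
  have "\<exists>c<k. C i c \<noteq> 0"
  proof (rule ccontr)
    assume "\<not> ?thesis"
    then have "(\<Sum>c<k. C i c * B c i) = 0"
      by simp
    with B assms(3) show False
      by simp
  qed
  then show ?thesis
    unfolding congr_def by (rule griffiths_positive_kahler[OF assms(1)])
qed

definition trace_normal_shape :: "nat \<Rightarrow> nat \<Rightarrow> (nat \<Rightarrow> nat \<Rightarrow> form) \<Rightarrow> bool" where
  "trace_normal_shape n k N \<longleftrightarrow> feq n (N 0 0) omega \<and>
     (\<forall>i<k. \<forall>j<k. form_trace n (N i j) = of_nat n * id_mat i j \<and> feq n (N j i) (conj_form (N i j)))"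

lemma normal_shape_if_trace_normal_shape:
  assumes "n \<ge> 1" "trace_normal_shape n k N"
  shows "normal_shape n k N"
proof -
  have "form_trace n (\<lambda>a b. N i i a b - omega a b) = form_trace n (N i i) - of_nat n" for i
    unfolding form_trace_def by (simp add: sum_subtractf omega_def)
  then show ?thesis
    using assms unfolding normal_shape_def trace_normal_shape_def primitive_iff_trace_zero[OF assms(1)]
    by (simp add: id_mat_def)
qed

lemma exists_trace_normalizing_congruence:
  assumes "n \<ge> 1" "0 < k" "griffiths_positive n k M" "feq n (M 0 0) omega"
  shows "\<exists>C. invertible_n k C \<and> trace_normal_shape n k (congr k C M)"
proof -
  obtain C where C: "invertible_n k C" and C0: "\<forall>j<k. C 0 j = id_mat 0 j"
    and CTC: "feq k (mat_mult k C (mat_mult k (trace_matrix n M) (conj_form C))) id_mat"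
    using congruence_to_identity_fixing_first_row[OF trace_matrix_hermitian[OF assms(3)]
        trace_matrix_pos_def[OF assms(1,3)] trace_matrix_0_0[of n M, OF assms(1,4)] assms(2)]
    by blast
  have "trace_normal_shape n k (congr k C M)"
    unfolding trace_normal_shape_def congr_0_0[of k C M, OF assms(2) C0] form_trace_congr[OF assms(1)]
    using assms(4) CTC congr_hermitian[OF assms(3)] by (simp add: feq_def)
  with C show ?thesis by blast
qed

section \<open>Unitary changes of coordinates\<close>

lemma coord_change_cong: "feq n h g \<Longrightarrow> feq n (coord_change n V h) (coord_change n V g)"
  unfolding feq_def coord_change_def by (auto intro!: sum.cong)

lemma coord_change_conj_form: "coord_change n V (conj_form h) = conj_form (coord_change n V h)"
proof (intro ext)
  fix c d
  have "conj_form (coord_change n V h) c d = (\<Sum>a<n. \<Sum>b<n. cnj (V a d) * cnj (h a b) * V b c)"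
    unfolding conj_form_def coord_change_def by (simp add: cnj_sum)
  also have "\<dots> = (\<Sum>b<n. \<Sum>a<n. cnj (V a d) * cnj (h a b) * V b c)"
    by (rule sum.swap)
  also have "\<dots> = coord_change n V (conj_form h) c d"
    unfolding coord_change_def conj_form_def by (simp add: ac_simps)
  finally show "coord_change n V (conj_form h) c d = conj_form (coord_change n V h) c d" ..
qed

lemma coord_change_cnj_unitary:
  "coord_change n (\<lambda>a c. cnj (U a c)) h = mat_mult n (conj_form U) (mat_mult n h U)"
  unfolding coord_change_def mat_mult_def conj_form_def
  by (auto intro!: ext simp: sum_distrib_left mult.assoc)

lemma coord_change_unitary_omega:
  assumes "unitary n V"
  shows "feq n (coord_change n V omega) omega"
proof -
  have "coord_change n V omega c d = (\<Sum>a<n. V a c * cnj (V a d))" for c d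
    unfolding coord_change_def omega_def by (intro sum.cong refl) (simp add: mult_delta_left mult_delta_right)
  moreover have "cnj (mat_mult n (conj_form V) V c d) = (\<Sum>a<n. V a c * cnj (V a d))" for c d
    unfolding mat_mult_def conj_form_def by (simp add: cnj_sum mult.commute)
  ultimately show ?thesis
    using assms unfolding unitary_def feq_def id_mat_def omega_def by (metis complex_cnj_one complex_cnj_zero)
qed

lemma form_trace_coord_change_unitary:
  assumes "unitary n V"
  shows "form_trace n (coord_change n V h) = form_trace n h"
proof -
  have "form_trace n (coord_change n V h) = (\<Sum>a<n. \<Sum>b<n. h a b * mat_mult n V (conj_form V) a b)"
    unfolding form_trace_def coord_change_def mat_mult_def conj_form_def
    by (subst sum_swap3) (simp add: sum_distrib_left ac_simps)
  also have "\<dots> = (\<Sum>a<n. \<Sum>b<n. h a b * id_mat a b)"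
    using assms unfolding unitary_def feq_def by simp
  also have "\<dots> = form_trace n h"
    unfolding form_trace_def id_mat_def by (intro sum.cong refl) (simp add: mult_delta_right)
  finally show ?thesis .
qed

lemma trace_normal_shape_coord_change:
  assumes V: "unitary n V" and N: "trace_normal_shape n k N"
  shows "trace_normal_shape n k (\<lambda>i j. coord_change n V (N i j))"
proof -
  have "feq n (coord_change n V (N 0 0)) omega"
    using N feq_trans[OF coord_change_cong coord_change_unitary_omega[OF V]]
    unfolding trace_normal_shape_def by blast
  moreover have "feq n (coord_change n V (N j i)) (conj_form (coord_change n V (N i j)))"
    if "i < k" "j < k" for i j
    using N that coord_change_cong[of n "N j i" "conj_form (N i j)" V]
    unfolding trace_normal_shape_def coord_change_conj_form by blast
  ultimately show ?thesis
    using N unfolding trace_normal_shape_def form_trace_coord_change_unitary[OF V] by blast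
qed

lemma kahler_diagonal_coordinates:
  assumes "kahler n h"
  shows "\<exists>V d. unitary n V \<and> feq n (coord_change n V h) (diagonal (\<lambda>l. complex_of_real (d l)))
    \<and> (\<forall>l<n. 0 < d l)"
proof -
  obtain U d where U: "unitary n U"
    and D: "feq n (mat_mult n (conj_form U) (mat_mult n h U)) (diagonal (\<lambda>l. complex_of_real (d l)))"
    using hermitian_unitarily_diagonalizable[OF kahler_hermitian[OF assms]] by blast
  have "\<forall>l<n. 0 < d l"
    using pos_def_eigenvalues_pos[OF U D kahler_pos_def[OF assms]] by blast
  with unitary_cnj[OF U] D show ?thesis
    unfolding coord_change_cnj_unitary[symmetric] by blast
qed

lemma trace_normal_shape_diagonal_coordinates:
  assumes "1 < k" "trace_normal_shape n k N" "kahler n (N 1 1)"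
  shows "\<exists>V. unitary n V \<and> trace_normal_shape n k (\<lambda>i j. coord_change n V (N i j)) \<and>
    (\<exists>b::nat \<Rightarrow> real. feq n (\<lambda>x y. coord_change n V (N 1 1) x y - omega x y)
        (\<lambda>x y. if x = y then complex_of_real (b x) else 0) \<and> (\<Sum>l<n. b l) = 0 \<and> (\<forall>l<n. b l > -1))"
proof -
  obtain V d where V: "unitary n V" and pos: "\<forall>l<n. 0 < d l"
    and diag: "feq n (coord_change n V (N 1 1)) (diagonal (\<lambda>l. complex_of_real (d l)))"
    using kahler_diagonal_coordinates[OF assms(3)] by blast
  have N': "trace_normal_shape n k (\<lambda>i j. coord_change n V (N i j))"
    by (rule trace_normal_shape_coord_change[OF V assms(2)])
  have "form_trace n (coord_change n V (N 1 1)) = (\<Sum>l<n. complex_of_real (d l))"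
    using diag unfolding form_trace_def feq_def diagonal_def by (intro sum.cong refl) simp
  also have "\<dots> = complex_of_real (\<Sum>l<n. d l)"
    by (rule of_real_sum[symmetric])
  finally have "complex_of_real (\<Sum>l<n. d l) = complex_of_real (real n)"
    using N' assms(1) unfolding trace_normal_shape_def id_mat_def by simp
  then have "(\<Sum>l<n. d l - 1) = 0"
    unfolding of_real_eq_iff by (simp add: sum_subtractf)
  moreover have "feq n (\<lambda>x y. coord_change n V (N 1 1) x y - omega x y)
      (\<lambda>x y. if x = y then complex_of_real (d x - 1) else 0)"
    using diag unfolding feq_def diagonal_def omega_def by simp
  ultimately show ?thesis
    using V N' pos by (intro exI[of _ V] conjI exI[of _ "\<lambda>l. d l - 1"]) simp_all
qed

theorem mainTheorem4:
  fixes n k :: nat and M :: "nat \<Rightarrow> nat \<Rightarrow> form"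
  assumes "n \<ge> 1" and "k \<ge> 2"
    and "griffiths_positive n k M"
    and "feq n (M 0 0) omega"
  shows "(\<exists>C. invertible_n k C \<and> normal_shape n k (congr k C M)) \<and>
         (\<exists>V C. invertible_n n V \<and> feq n (coord_change n V omega) omega \<and>
            invertible_n k C \<and>
            (let N = (\<lambda>i j. coord_change n V (congr k C M i j)) in
               normal_shape n k N \<and>
               (\<exists>b::nat \<Rightarrow> real.
                  feq n (\<lambda>x y. N 1 1 x y - omega x y)
                        (\<lambda>x y. if x = y then complex_of_real (b x) else 0) \<and>
                  (\<Sum>l<n. b l) = 0 \<and> (\<forall>l<n. b l > -1))))"
proof -
  obtain C where C: "invertible_n k C" and N: "trace_normal_shape n k (congr k C M)"
    using exists_trace_normalizing_congruence[OF assms(1) _ assms(3,4)] assms(2) by auto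
  have "kahler n (congr k C M 1 1)"
    using kahler_congr_diag[OF assms(3) C] assms(2) by simp
  then obtain V b where V: "unitary n V"
    and N': "trace_normal_shape n k (\<lambda>i j. coord_change n V (congr k C M i j))"
    and b: "feq n (\<lambda>x y. coord_change n V (congr k C M 1 1) x y - omega x y)
        (\<lambda>x y. if x = y then complex_of_real (b x) else 0)"
      "(\<Sum>l<n. b l) = 0" "\<forall>l<n. b l > -1"
    using trace_normal_shape_diagonal_coordinates[OF _ N] assms(2) by auto
  show ?thesis
    unfolding Let_def
    using C invertible_n_unitary[OF V] coord_change_unitary_omega[OF V] b
      normal_shape_if_trace_normal_shape[OF assms(1) N] normal_shape_if_trace_normal_shape[OF assms(1) N']
    by blast
qed

end
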